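(* Let $1<p<\lambda<\infty$ and $1<r<\mu<\infty$ with $\lambda<\mu$ and $\frac r\mu>\frac p\lambda$, and let $1\le\kappa,\nu\le\infty$. Let $\alpha\in(0,n/\lambda)$ be given by $\frac\alpha n=\frac1\lambda-\frac1\mu$. Then $M_\alpha$ does not map $\mathcal M^{\lambda}_{p\kappa}(\mathbb R^n)$ continuously into $\mathcal M^{\mu}_{r\nu}(\mathbb R^n)$; i.e. there is no constant $C$ with $\|M_\alpha f\|_{\mathcal M^{\mu}_{r\nu}}\le C\|f\|_{\mathcal M^{\lambda}_{p\kappa}}$ for all $f\in\mathcal M^{\lambda}_{p\kappa}(\mathbb R^n)$.
   Context: Lorentz spaces: for measurable $\Omega$, $d_f(s)=|\{x\in\Omega:|f(x)|>s\}|$, $f^*(t)=\inf\{s>0:d_f(s)\le t\}$; for $d<\infty$, $\|f\|_{L^{pd}(\Omega)}=\big(\frac dp\int_0^{|\Omega|}[t^{1/p}f^*(t)]^d\frac{dt}{t}\big)^{1/d}$; $\|f\|_{L^{p\infty}(\Omega)}=\sup_tt^{1/p}f^*(t)$. Morrey–Lorentz spaces: $\|f\|_{\mathcal M^{\lambda}_{q\kappa}(\Omega)}:=\sup_{Q}|Q|^{\frac1\lambda-\frac1q}\|f\|_{L^{q\kappa}(Q)}$ over $Q=B\cap\Omega$, $B$ a ball. Fractional maximal function: $(M_\alpha f)(x)=\sup_{B\ni x}|B|^{\alpha/n}\frac1{|B|}\int_B|f|$, sup over balls containing $x$. *)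

theory Defs
  imports "HOL-Analysis.Analysis"
begin

definition epow :: "ennreal \<Rightarrow> real \<Rightarrow> ennreal" where
  "epow x d = (if x = top then top else ennreal (enn2real x powr d))"

text \<open>Distribution function d_g(s) = |{x in Omega. |g x| > s}| (g given as the
  nonnegative, possibly infinite, function |f|).\<close>
definition distrib_fun :: "'a::euclidean_space set \<Rightarrow> ('a \<Rightarrow> ennreal) \<Rightarrow> real \<Rightarrow> ennreal" where
  "distrib_fun \<Omega> g s = emeasure lebesgue {x \<in> \<Omega>. g x > ennreal s}"

definition rearr :: "'a::euclidean_space set \<Rightarrow> ('a \<Rightarrow> ennreal) \<Rightarrow> real \<Rightarrow> ennreal" where
  "rearr \<Omega> g t = (INF s \<in> {s::real. s > 0 \<and> distrib_fun \<Omega> g s \<le> ennreal t}. ennreal s)"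

text \<open>Lorentz (quasi)norm of L^{p d}(Omega); d = top encodes d = infinity.\<close>
definition lorentz_norm :: "'a::euclidean_space set \<Rightarrow> real \<Rightarrow> ennreal \<Rightarrow> ('a \<Rightarrow> ennreal) \<Rightarrow> ennreal" where
  "lorentz_norm \<Omega> p d g =
    (if d = top then (SUP t \<in> {0<..}. ennreal (t powr (1/p)) * rearr \<Omega> g t)
     else epow (ennreal (enn2real d / p) *
            (\<integral>\<^sup>+ t. indicator {t. 0 < t \<and> ennreal t < emeasure lebesgue \<Omega>} t *
                 (epow (ennreal (t powr (1/p)) * rearr \<Omega> g t) (enn2real d) * ennreal (1 / t)) \<partial>lborel))
          (1 / enn2real d))"

definition morrey_lorentz_norm :: "'a::euclidean_space set \<Rightarrow> real \<Rightarrow> real \<Rightarrow> ennreal \<Rightarrow> ('a \<Rightarrow> ennreal) \<Rightarrow> ennreal" where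
  "morrey_lorentz_norm \<Omega> lam q \<kappa> g =
    (SUP (c, r) \<in> UNIV \<times> {0<..}.
       ennreal (measure lebesgue (ball c r \<inter> \<Omega>) powr (1/lam - 1/q)) *
       lorentz_norm (ball c r \<inter> \<Omega>) q \<kappa> g)"

definition frac_max :: "real \<Rightarrow> ('a::euclidean_space \<Rightarrow> real) \<Rightarrow> 'a \<Rightarrow> ennreal" where
  "frac_max \<alpha> f x =
    (SUP (c, r) \<in> {(c, r). 0 < r \<and> x \<in> ball c r}.
       ennreal (measure lebesgue (ball c r) powr (\<alpha> / real DIM('a) - 1)) *
       (\<integral>\<^sup>+ y \<in> ball c r. ennreal \<bar>f y\<bar> \<partial>lebesgue))"

end

theory Submission
  imports Defs
begin

text \<open>The test functions are indicators of \<open>N^n\<close> cubes of side \<open>\<delta> = N^(-b)\<close>, \<open>b = \<lambda>/(\<lambda> - p)\<close>,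
  sitting at the points of the grid \<open>(1/N)\<int>^n \<inter> [0,1)^n\<close>. A ball of radius \<open>R\<close> meets at most
  \<open>(5 max(1, RN))^n\<close> of them, so the Morrey--Lorentz norm of order \<open>(\<lambda>, p)\<close> is at most a multiple
  of \<open>\<delta>^(n/\<lambda>) + (N\<delta>)^(n/p)\<close>; the choice of \<open>b\<close> balances the two terms at \<open>N^(-n/(\<lambda>-p))\<close>.
  On the other hand every cube fills a fixed fraction of a ball of radius \<open>n\<delta>\<close>, so
  \<open>M\<^sub>\<alpha> f \<ge> c \<delta>^\<alpha>\<close> on the whole array, and the Morrey--Lorentz norm of order \<open>(\<mu>, r)\<close>, tested
  on one fixed ball, is at least a multiple of \<open>\<delta>^\<alpha> (N\<delta>)^(n/r)\<close>. The quotient grows like \<open>N^w\<close>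
  with \<open>w = n (\<lambda>/\<mu> - p/r) / (\<lambda> - p)\<close>, which is positive exactly when \<open>r/\<mu> > p/\<lambda>\<close>.\<close>

section \<open>Lorentz norms\<close>

lemma epow_mono: "x \<le> y \<Longrightarrow> 0 \<le> d \<Longrightarrow> epow x d \<le> epow y d"
  unfolding epow_def
  by (cases "y = top"; cases "x = top")
     (auto simp: top_unique less_top intro!: ennreal_leI powr_mono2 enn2real_mono)

lemma epow_ennreal: "0 \<le> a \<Longrightarrow> epow (ennreal a) d = ennreal (a powr d)"
  by (simp add: epow_def)

lemma ennreal_ge_1_finiteE:
  assumes "1 \<le> d" "d \<noteq> top"
  obtains d' where "d = ennreal d'" "1 \<le> d'"
proof
  show "d = ennreal (enn2real d)" using assms(2) by (simp add: less_top)
  show "1 \<le> enn2real d" using enn2real_mono[OF assms(1)] assms(2) by (simp add: less_top)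
qed

definition lorentz_integrand :: "'a::euclidean_space set \<Rightarrow> real \<Rightarrow> real \<Rightarrow> ('a \<Rightarrow> ennreal) \<Rightarrow> real \<Rightarrow> ennreal"
  where "lorentz_integrand \<Omega> p d g t = indicator {t. 0 < t \<and> ennreal t < emeasure lebesgue \<Omega>} t *
    (epow (ennreal (t powr (1/p)) * rearr \<Omega> g t) d * ennreal (1 / t))"

lemma lorentz_norm_ennreal:
  "0 \<le> d \<Longrightarrow> lorentz_norm \<Omega> p (ennreal d) g
    = epow (ennreal (d / p) * (\<integral>\<^sup>+ t. lorentz_integrand \<Omega> p d g t \<partial>lborel)) (1 / d)"
  by (simp add: lorentz_norm_def lorentz_integrand_def)

lemma lorentz_norm_top:
  "lorentz_norm \<Omega> p top g = (SUP t \<in> {0<..}. ennreal (t powr (1/p)) * rearr \<Omega> g t)"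
  by (simp add: lorentz_norm_def)

lemma distrib_fun_indicator:
  fixes F \<Omega> :: "'a::euclidean_space set"
  shows "distrib_fun \<Omega> (\<lambda>x. ennreal (indicator F x)) s =
     (if s < 1 then emeasure lebesgue (\<Omega> \<inter> F) else 0)"
proof -
  have "{x \<in> \<Omega>. ennreal (indicator F x) > ennreal s} = (if s < 1 then \<Omega> \<inter> F else {})"
    by (auto simp: indicator_def ennreal_less_iff ennreal_lessI split: if_splits)
  then show ?thesis unfolding distrib_fun_def by simp
qed

lemma rearr_indicator_le:
  fixes F \<Omega> :: "'a::euclidean_space set"
  assumes m: "emeasure lebesgue (\<Omega> \<inter> F) = ennreal m"
  shows "rearr \<Omega> (\<lambda>x. ennreal (indicator F x)) t \<le> (if t < m then 1 else 0)"
proof (cases "t < m")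
  case True
  have "rearr \<Omega> (\<lambda>x. ennreal (indicator F x)) t \<le> ennreal 1"
    unfolding rearr_def by (rule INF_lower) (auto simp: distrib_fun_indicator)
  with True show ?thesis by simp
next
  case False
  have "rearr \<Omega> (\<lambda>x. ennreal (indicator F x)) t \<le> 0"
  proof (rule ennreal_le_epsilon)
    fix e :: real assume "0 < e"
    have "rearr \<Omega> (\<lambda>x. ennreal (indicator F x)) t \<le> ennreal e"
      unfolding rearr_def
      by (rule INF_lower) (use \<open>0 < e\<close> False m in \<open>auto simp: distrib_fun_indicator intro!: ennreal_leI\<close>)
    then show "rearr \<Omega> (\<lambda>x. ennreal (indicator F x)) t \<le> 0 + ennreal e" by simp
  qed
  with False show ?thesis by simp
qed

lemma lorentz_integrand_indicator_le:
  fixes F \<Omega> :: "'a::euclidean_space set"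
  assumes m: "emeasure lebesgue (\<Omega> \<inter> F) = ennreal m" and p: "0 < p" and d: "1 \<le> d"
  shows "lorentz_integrand \<Omega> p d (\<lambda>x. ennreal (indicator F x)) t \<le> ennreal (t powr (d/p - 1)) * indicator {0..m} t"
proof (cases "0 < t \<and> t < m")
  case True
  then have t: "0 < t" "t < m" by auto
  have "epow (ennreal (t powr (1/p)) * rearr \<Omega> (\<lambda>x. ennreal (indicator F x)) t) d
       \<le> epow (ennreal (t powr (1/p))) d"
    using rearr_indicator_le[OF m, of t] t d by (intro epow_mono) (auto intro: mult_left_le)
  also have "\<dots> = ennreal (t powr (d/p))"
    by (simp add: epow_ennreal powr_powr)
  finally have "epow (ennreal (t powr (1/p)) * rearr \<Omega> (\<lambda>x. ennreal (indicator F x)) t) d * ennreal (1 / t)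
      \<le> ennreal (t powr (d/p)) * ennreal (1/t)" by (rule mult_right_mono) simp
  also have "\<dots> = ennreal (t powr (d/p - 1))"
    using t by (simp add: powr_diff ennreal_mult'[symmetric] divide_inverse)
  finally show ?thesis using t by (auto simp: lorentz_integrand_def indicator_def)
next
  case False
  moreover have "rearr \<Omega> (\<lambda>x. ennreal (indicator F x)) t = 0" if "m \<le> t"
    using rearr_indicator_le[OF m, of t] that by simp
  ultimately show ?thesis using d by (auto simp: lorentz_integrand_def indicator_def epow_def not_less)
qed

lemma lorentz_norm_indicator_le:
  fixes F \<Omega> :: "'a::euclidean_space set"
  assumes p: "0 < p" and d: "1 \<le> d" and m: "emeasure lebesgue (\<Omega> \<inter> F) = ennreal m" and m0: "0 \<le> m"
  shows "lorentz_norm \<Omega> p d (\<lambda>x. ennreal (indicator F x)) \<le> ennreal (m powr (1/p))"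
proof (cases "d = top")
  case True
  have "ennreal (t powr (1/p)) * rearr \<Omega> (\<lambda>x. ennreal (indicator F x)) t \<le> ennreal (m powr (1/p))"
    if "t > 0" for t
  proof -
    have "ennreal (t powr (1/p)) * rearr \<Omega> (\<lambda>x. ennreal (indicator F x)) t
        \<le> ennreal (t powr (1/p)) * (if t < m then 1 else 0)"
      by (rule mult_left_mono[OF rearr_indicator_le[OF m]]) simp
    also have "\<dots> \<le> ennreal (m powr (1/p))"
      using that p by (auto intro!: ennreal_leI powr_mono2)
    finally show ?thesis .
  qed
  then show ?thesis using True by (auto simp: lorentz_norm_top intro!: SUP_least)
next
  case False
  obtain d' where d': "d = ennreal d'" "1 \<le> d'"
    using d False by (rule ennreal_ge_1_finiteE)
  have q: "0 < d'/p" using d' p by simp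
  have "(\<integral>\<^sup>+ t. lorentz_integrand \<Omega> p d' (\<lambda>x. ennreal (indicator F x)) t \<partial>lborel)
      \<le> (\<integral>\<^sup>+ t. ennreal (t powr (d'/p - 1)) * indicator {0..m} t \<partial>lborel)"
    using lorentz_integrand_indicator_le[OF m p d'(2)] by (rule nn_integral_mono)
  also have "\<dots> = ennreal (m powr (d'/p) / (d'/p))"
    using nn_integral_has_integral_lebesgue'[OF _ has_integral_powr_from_0[of "d'/p - 1" m]] q m0
    by simp
  finally have "lorentz_norm \<Omega> p d (\<lambda>x. ennreal (indicator F x))
      \<le> epow (ennreal (d'/p) * ennreal (m powr (d'/p) / (d'/p))) (1/d')"
    using d' by (auto simp: lorentz_norm_ennreal intro!: epow_mono mult_left_mono)
  also have "\<dots> = ennreal (m powr (1/p))"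
    using q p d' m0 by (simp add: ennreal_mult'[symmetric] epow_ennreal powr_powr)
  finally show ?thesis .
qed

lemma rearr_ge_of_lower_bound:
  fixes \<Omega> E :: "'a::euclidean_space set" and g :: "'a \<Rightarrow> ennreal"
  assumes EO: "E \<subseteq> \<Omega>" and e: "emeasure lebesgue E = ennreal e" and e0: "0 < e" and t: "t < e"
    and meas: "\<And>s. {x\<in>\<Omega>. g x > ennreal s} \<in> sets lebesgue"
    and ge: "\<And>x. x \<in> E \<Longrightarrow> ennreal c \<le> g x"
  shows "ennreal c \<le> rearr \<Omega> g t"
  unfolding rearr_def
proof (rule INF_greatest)
  fix s assume "s \<in> {s. 0 < s \<and> distrib_fun \<Omega> g s \<le> ennreal t}"
  then have s: "0 < s" "distrib_fun \<Omega> g s \<le> ennreal t" by auto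
  show "ennreal c \<le> ennreal s"
  proof (rule ccontr)
    assume "\<not> ennreal c \<le> ennreal s"
    then have "ennreal s < ennreal c" by simp
    then have "E \<subseteq> {x\<in>\<Omega>. g x > ennreal s}"
      using EO ge by (auto intro: less_le_trans)
    then have "emeasure lebesgue E \<le> distrib_fun \<Omega> g s"
      unfolding distrib_fun_def by (rule emeasure_mono) (rule meas)
    with s e have "ennreal e \<le> ennreal t" by simp
    then show False using t e0 by (simp add: ennreal_le_iff2)
  qed
qed

lemma lorentz_integrand_ge:
  fixes \<Omega> :: "'a::euclidean_space set" and g :: "'a \<Rightarrow> ennreal"
  assumes rearr: "\<And>t. t < e \<Longrightarrow> ennreal c \<le> rearr \<Omega> g t"
    and e: "ennreal e \<le> emeasure lebesgue \<Omega>" and e0: "0 < e" and c: "0 < c"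
    and r: "1 \<le> r" and d: "1 \<le> d"
  shows "ennreal (((e/2) powr (1/r) * c) powr d / e) * indicator {e/2<..<e} t \<le> lorentz_integrand \<Omega> r d g t"
proof (cases "t \<in> {e/2<..<e}")
  case False then show ?thesis by simp
next
  case True
  then have t: "e/2 < t" "t < e" "0 < t" using e0 by auto
  have tO: "ennreal t < emeasure lebesgue \<Omega>"
    using e e0 t by (meson ennreal_lessI order_less_le_trans)
  have "epow (ennreal ((e/2) powr (1/r) * c)) d \<le> epow (ennreal (t powr (1/r) * c)) d"
    using t c e0 r d by (intro epow_mono ennreal_leI mult_right_mono powr_mono2) auto
  also have "\<dots> \<le> epow (ennreal (t powr (1/r)) * rearr \<Omega> g t) d"
    using t c d by (intro epow_mono) (auto simp: ennreal_mult' intro!: mult_left_mono rearr)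
  finally have "epow (ennreal ((e/2) powr (1/r) * c)) d \<le> epow (ennreal (t powr (1/r)) * rearr \<Omega> g t) d" .
  then have "ennreal (((e/2) powr (1/r) * c) powr d) \<le> epow (ennreal (t powr (1/r)) * rearr \<Omega> g t) d"
    using e0 c by (simp add: epow_ennreal)
  moreover have "ennreal (1/e) \<le> ennreal (1/t)"
    using t by (intro ennreal_leI) (simp add: frac_le)
  ultimately have "ennreal (((e/2) powr (1/r) * c) powr d) * ennreal (1/e)
      \<le> epow (ennreal (t powr (1/r)) * rearr \<Omega> g t) d * ennreal (1/t)"
    by (rule mult_mono) auto
  moreover have "ennreal (((e/2) powr (1/r) * c) powr d / e) = ennreal (((e/2) powr (1/r) * c) powr d) * ennreal (1/e)"
    using e0 ennreal_mult[of "((e/2) powr (1/r) * c) powr d" "1/e"] by simp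
  ultimately show ?thesis using True tO by (simp add: lorentz_integrand_def indicator_def)
qed

lemma lorentz_norm_ennreal_ge_of_lower_bound:
  fixes \<Omega> :: "'a::euclidean_space set" and g :: "'a \<Rightarrow> ennreal"
  assumes rearr: "\<And>t. t < e \<Longrightarrow> ennreal c \<le> rearr \<Omega> g t"
    and e: "ennreal e \<le> emeasure lebesgue \<Omega>" and e0: "0 < e" and c: "0 < c"
    and r: "1 \<le> r" and d: "1 \<le> d"
  shows "ennreal (c * (e/2) powr (1/r) / (2*r)) \<le> lorentz_norm \<Omega> r (ennreal d) g"
proof -
  define X where "X = ((e/2) powr (1/r) * c) powr d"
  have X0: "0 < X" using e0 c by (simp add: X_def)
  have "ennreal (X / 2) = (\<integral>\<^sup>+ t. ennreal (X / e) * indicator {e/2<..<e} t \<partial>lborel)"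
    using e0 X0 by (simp add: nn_integral_cmult_indicator ennreal_mult'[symmetric])
  also have "\<dots> \<le> (\<integral>\<^sup>+ t. lorentz_integrand \<Omega> r d g t \<partial>lborel)"
    unfolding X_def by (rule nn_integral_mono) (rule lorentz_integrand_ge[OF rearr e e0 c r d])
  finally have integral: "ennreal (X / 2) \<le> \<dots>" .
  have "ennreal (X / (2*r)) \<le> ennreal (d / r) * ennreal (X / 2)"
    using X0 r d by (simp add: ennreal_mult'[symmetric] divide_simps mult_right_mono)
  also have "\<dots> \<le> ennreal (d / r) * (\<integral>\<^sup>+ t. lorentz_integrand \<Omega> r d g t \<partial>lborel)"
    using integral by (rule mult_left_mono) simp
  finally have "epow (ennreal (X / (2*r))) (1/d) \<le> lorentz_norm \<Omega> r (ennreal d) g"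
    using d by (auto simp: lorentz_norm_ennreal intro!: epow_mono)
  moreover have "c * (e/2) powr (1/r) / (2*r) \<le> (X / (2*r)) powr (1/d)"
  proof -
    have "(2*r) powr (1/d) \<le> (2*r) powr 1"
      using r d by (intro powr_mono) auto
    moreover have "X powr (1/d) = c * (e/2) powr (1/r)"
      using e0 c d by (simp add: X_def powr_powr mult.commute)
    moreover have "(X / (2*r)) powr (1/d) = X powr (1/d) / (2*r) powr (1/d)"
      using X0 r by (simp add: powr_divide)
    ultimately show ?thesis using r c e0 by (simp add: frac_le)
  qed
  ultimately show ?thesis
    using X0 r by (simp add: epow_ennreal) (meson ennreal_leI order_trans)
qed

lemma lorentz_norm_ge_of_lower_bound:
  fixes \<Omega> E :: "'a::euclidean_space set" and g :: "'a \<Rightarrow> ennreal"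
  assumes EO: "E \<subseteq> \<Omega>" and Om: "\<Omega> \<in> sets lebesgue"
    and e: "emeasure lebesgue E = ennreal e" and e0: "0 < e"
    and meas: "\<And>s. {x\<in>\<Omega>. g x > ennreal s} \<in> sets lebesgue"
    and ge: "\<And>x. x \<in> E \<Longrightarrow> ennreal c \<le> g x" and c: "0 < c"
    and r: "1 \<le> r" and d: "1 \<le> d"
  shows "ennreal (c * (e/2) powr (1/r) / (2*r)) \<le> lorentz_norm \<Omega> r d g"
proof -
  have rearr: "ennreal c \<le> rearr \<Omega> g t" if "t < e" for t
    by (rule rearr_ge_of_lower_bound[OF EO e e0 that meas ge])
  show ?thesis
  proof (cases "d = top")
    case True
    have "c * (e/2) powr (1/r) / (2*r) \<le> (e/2) powr (1/r) * c"
      using c e0 r by (simp add: divide_le_eq mult_le_cancel_left1 not_less mult.commute)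
    then have "ennreal (c * (e/2) powr (1/r) / (2*r)) \<le> ennreal ((e/2) powr (1/r)) * ennreal c"
      by (simp add: ennreal_mult'[symmetric] ennreal_leI)
    also have "\<dots> \<le> ennreal ((e/2) powr (1/r)) * rearr \<Omega> g (e/2)"
      by (rule mult_left_mono[OF rearr]) (use e0 in auto)
    also have "\<dots> \<le> lorentz_norm \<Omega> r d g"
      using True e0 by (auto simp: lorentz_norm_top intro!: SUP_upper2[where i="e/2"])
    finally show ?thesis .
  next
    case False
    obtain d' where "d = ennreal d'" "1 \<le> d'"
      using d False by (rule ennreal_ge_1_finiteE)
    moreover have "ennreal e \<le> emeasure lebesgue \<Omega>"
      using emeasure_mono[OF EO Om] e by simp
    ultimately show ?thesis
      using lorentz_norm_ennreal_ge_of_lower_bound[OF rearr _ e0 c r] by simp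
  qed
qed

section \<open>Morrey--Lorentz norms and the fractional maximal function\<close>

lemma morrey_lorentz_norm_ge_ball:
  fixes c :: "'a::euclidean_space"
  assumes "0 < R"
  shows "ennreal (measure lebesgue (ball c R \<inter> \<Omega>) powr (1/lam - 1/q)) * lorentz_norm (ball c R \<inter> \<Omega>) q \<kappa> g
     \<le> morrey_lorentz_norm \<Omega> lam q \<kappa> g"
  unfolding morrey_lorentz_norm_def using assms
  by (intro SUP_upper2[where i="(c, R)"]) auto

lemma frac_max_ge_ball:
  fixes f :: "'a::euclidean_space \<Rightarrow> real"
  assumes "0 < r" "x \<in> ball c r"
  shows "ennreal (measure lebesgue (ball c r) powr (\<alpha> / real DIM('a) - 1)) *
       (\<integral>\<^sup>+ y \<in> ball c r. ennreal \<bar>f y\<bar> \<partial>lebesgue) \<le> frac_max \<alpha> f x"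
  unfolding frac_max_def
  by (rule SUP_upper2[where i="(c, r)"]) (use assms in auto)

lemma open_frac_max_superlevel:
  fixes f :: "'a::euclidean_space \<Rightarrow> real"
  shows "open {x. ennreal s < frac_max \<alpha> f x}"
proof (subst open_subopen, intro ballI)
  fix x assume "x \<in> {x. ennreal s < frac_max \<alpha> f x}"
  then obtain c r where cr: "0 < r" "x \<in> ball c r"
    and lt: "ennreal s < ennreal (measure lebesgue (ball c r) powr (\<alpha> / real DIM('a) - 1)) *
       (\<integral>\<^sup>+ y \<in> ball c r. ennreal \<bar>f y\<bar> \<partial>lebesgue)"
    unfolding frac_max_def less_SUP_iff by auto
  have "ball c r \<subseteq> {x. ennreal s < frac_max \<alpha> f x}"
  proof
    fix y assume "y \<in> ball c r"
    from lt frac_max_ge_ball[OF cr(1) this] show "y \<in> {x. ennreal s < frac_max \<alpha> f x}"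
      using order.strict_trans2 by blast
  qed
  with cr show "\<exists>T. open T \<and> x \<in> T \<and> T \<subseteq> {x. ennreal s < frac_max \<alpha> f x}"
    by auto
qed

lemma sets_frac_max_superlevel:
  fixes f :: "'a::euclidean_space \<Rightarrow> real"
  assumes "\<Omega> \<in> sets lebesgue"
  shows "{x\<in>\<Omega>. ennreal s < frac_max \<alpha> f x} \<in> sets lebesgue"
proof -
  have "{x. ennreal s < frac_max \<alpha> f x} \<in> sets lebesgue"
    by (metis borel_open open_frac_max_superlevel sets_completionI_sets sets_lborel)
  moreover have "{x\<in>\<Omega>. ennreal s < frac_max \<alpha> f x} = \<Omega> \<inter> {x. ennreal s < frac_max \<alpha> f x}"
    by auto
  ultimately show ?thesis using assms by auto
qed

section \<open>A grid of small cubes\<close>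

definition grid_corner :: "nat \<Rightarrow> ('a::euclidean_space \<Rightarrow> nat) \<Rightarrow> 'a" where
  "grid_corner N k = (\<Sum>b\<in>Basis. (real (k b) / real N) *\<^sub>R b)"

definition grid_cube :: "nat \<Rightarrow> real \<Rightarrow> ('a::euclidean_space \<Rightarrow> nat) \<Rightarrow> 'a set" where
  "grid_cube N \<delta> k = cbox (grid_corner N k) (grid_corner N k + \<delta> *\<^sub>R One)"

definition grid_indices :: "nat \<Rightarrow> ('a::euclidean_space \<Rightarrow> nat) set" where
  "grid_indices N = (\<Pi>\<^sub>E b\<in>(Basis::'a set). {..<N})"

definition grid_set :: "nat \<Rightarrow> real \<Rightarrow> 'a::euclidean_space set" where
  "grid_set N \<delta> = (\<Union>k\<in>grid_indices N. grid_cube N \<delta> k)"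

lemma card_near_grid_points_le:
  fixes N :: nat and t w :: real
  assumes N: "0 < N" and w: "0 \<le> w"
  shows "real (card {j. j < N \<and> \<bar>real j / real N - t\<bar> \<le> w}) \<le> 2 * w * N + 1"
proof (cases "{j. j < N \<and> \<bar>real j / real N - t\<bar> \<le> w} = {}")
  case True then show ?thesis using w by (simp only: card.empty) simp
next
  case False
  define S where "S = {j. j < N \<and> \<bar>real j / real N - t\<bar> \<le> w}"
  have fin: "finite S" unfolding S_def by auto
  define j0 where "j0 = Min S"
  have j0S: "j0 \<in> S" using False fin unfolding j0_def S_def by (intro Min_in) auto
  have "S \<subseteq> {j0..j0 + nat \<lfloor>2*w*N\<rfloor>}"
  proof
    fix j assume jS: "j \<in> S"
    have "j0 \<le> j" using fin jS unfolding j0_def by simp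
    have "real j / N - real j0 / N \<le> 2 * w" using jS j0S unfolding S_def by auto
    then have "real j - real j0 \<le> 2 * w * N" using N by (simp add: field_simps diff_divide_distrib[symmetric])
    then have "int j - int j0 \<le> \<lfloor>2*w*N\<rfloor>" by (simp add: le_floor_iff)
    then show "j \<in> {j0..j0 + nat \<lfloor>2*w*N\<rfloor>}" using \<open>j0 \<le> j\<close> by auto
  qed
  then have "card S \<le> card {j0..j0 + nat \<lfloor>2*w*N\<rfloor>}" by (rule card_mono[rotated]) auto
  then have "real (card S) \<le> real (nat \<lfloor>2*w*N\<rfloor>) + 1" by simp
  also have "\<dots> \<le> 2 * w * N + 1" using w by simp
  finally show ?thesis unfolding S_def .
qed

lemma grid_corner_inner: "b \<in> Basis \<Longrightarrow> grid_corner N k \<bullet> b = real (k b) / real N"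
  unfolding grid_corner_def by (simp add: inner_sum_left inner_Basis if_distrib sum.delta cong: if_cong)

lemma mem_grid_cube:
  "x \<in> grid_cube N \<delta> k \<longleftrightarrow> (\<forall>b\<in>Basis. real (k b) / real N \<le> x \<bullet> b \<and> x \<bullet> b \<le> real (k b) / real N + \<delta>)"
  unfolding grid_cube_def mem_box by (auto simp: inner_add_left grid_corner_inner)

lemma grid_cube_lmeasurable: "grid_cube N \<delta> k \<in> lmeasurable"
  unfolding grid_cube_def by simp

lemma measure_grid_cube:
  "0 \<le> \<delta> \<Longrightarrow> measure lebesgue (grid_cube N \<delta> k :: 'a set) = \<delta> ^ DIM('a::euclidean_space)"
  unfolding grid_cube_def by (simp add: content_cbox inner_add_left)

lemma emeasure_grid_cube:
  "0 \<le> \<delta> \<Longrightarrow> emeasure lebesgue (grid_cube N \<delta> k :: 'a set) = ennreal (\<delta> ^ DIM('a::euclidean_space))"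
  using measure_grid_cube[of \<delta> N k] emeasure_eq_measure2[of "grid_cube N \<delta> k :: 'a set" lebesgue]
    grid_cube_lmeasurable[of N \<delta> k]
  by simp

lemma finite_grid_indices: "finite (grid_indices N)"
  unfolding grid_indices_def by (auto intro!: finite_PiE)

lemma card_grid_indices: "card (grid_indices N :: ('a::euclidean_space \<Rightarrow> nat) set) = N ^ DIM('a)"
  unfolding grid_indices_def by (simp add: card_PiE)

lemma grid_set_lmeasurable: "grid_set N \<delta> \<in> lmeasurable"
  unfolding grid_set_def
  using finite_grid_indices by (intro fmeasurable.finite_UN) (auto simp: grid_cube_lmeasurable)

lemma disjoint_family_grid_cube:
  assumes N: "0 < N" and \<delta>: "\<delta> < 1 / real N"
  shows "disjoint_family_on (grid_cube N \<delta> :: _ \<Rightarrow> 'a::euclidean_space set) (grid_indices N)"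
  unfolding disjoint_family_on_def
proof (intro ballI impI)
  fix k k' :: "'a \<Rightarrow> nat" assume k: "k \<in> grid_indices N" "k' \<in> grid_indices N" "k \<noteq> k'"
  then obtain b where b: "b \<in> Basis" "k b \<noteq> k' b"
    unfolding grid_indices_def by (metis PiE_ext)
  show "grid_cube N \<delta> k \<inter> grid_cube N \<delta> k' = {}"
  proof (rule ccontr)
    assume "grid_cube N \<delta> k \<inter> grid_cube N \<delta> k' \<noteq> {}"
    then obtain x where "x \<in> grid_cube N \<delta> k" "x \<in> grid_cube N \<delta> k'" by auto
    then have h: "real (k b) / N \<le> x \<bullet> b" "x \<bullet> b \<le> real (k b) / N + \<delta>"
      "real (k' b) / N \<le> x \<bullet> b" "x \<bullet> b \<le> real (k' b) / N + \<delta>"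
      using b(1) unfolding mem_grid_cube by auto
    have "1 \<le> \<bar>real (k b) - real (k' b)\<bar>" using b(2) by linarith
    then have "1 / real N \<le> \<bar>real (k b) / N - real (k' b) / N\<bar>"
      using N by (simp add: diff_divide_distrib[symmetric] abs_div divide_right_mono)
    with h \<delta> show False by linarith
  qed
qed

lemma measure_grid_set:
  assumes N: "0 < N" and \<delta>: "0 \<le> \<delta>" "\<delta> < 1 / real N"
  shows "measure lebesgue (grid_set N \<delta> :: 'a::euclidean_space set) = (real N * \<delta>) ^ DIM('a)"
proof -
  have "measure lebesgue (grid_set N \<delta> :: 'a set) = (\<Sum>k\<in>grid_indices N. measure lebesgue (grid_cube N \<delta> k :: 'a set))"
    unfolding grid_set_def
    by (rule measure_finite_Union[OF finite_grid_indices _ disjoint_family_grid_cube[OF N \<delta>(2)]])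
       (auto simp: grid_cube_lmeasurable fmeasurableD emeasure_grid_cube[OF \<delta>(1)])
  also have "\<dots> = (real N * \<delta>) ^ DIM('a)"
    using \<delta> by (simp add: measure_grid_cube card_grid_indices power_mult_distrib)
  finally show ?thesis .
qed

lemma card_grid_cubes_meeting_ball_le:
  assumes N: "0 < N" and \<delta>: "0 \<le> \<delta>" and R: "0 \<le> R"
  shows "real (card {k\<in>grid_indices N. grid_cube N \<delta> k \<inter> ball x R \<noteq> ({} :: 'a::euclidean_space set)})
     \<le> (2 * (R + \<delta>) * N + 1) ^ DIM('a)"
proof -
  define K where "K = {k\<in>grid_indices N. grid_cube N \<delta> k \<inter> ball x R \<noteq> ({} :: 'a set)}"
  define T where "T = (\<lambda>b::'a. {j. j < N \<and> \<bar>real j / real N - x \<bullet> b\<bar> \<le> R + \<delta>})"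
  have "K \<subseteq> (\<Pi>\<^sub>E b\<in>Basis. T b)"
  proof
    fix k assume "k \<in> K"
    then obtain y where y: "y \<in> grid_cube N \<delta> k" "y \<in> ball x R" and k: "k \<in> grid_indices N"
      unfolding K_def by auto
    show "k \<in> (\<Pi>\<^sub>E b\<in>Basis. T b)"
    proof (rule PiE_I)
      fix b :: 'a assume b: "b \<in> Basis"
      have "\<bar>(y - x) \<bullet> b\<bar> \<le> norm (y - x)" using b by (rule Basis_le_norm)
      also have "\<dots> < R" using y(2) by (simp add: dist_norm norm_minus_commute)
      finally have 1: "\<bar>y \<bullet> b - x \<bullet> b\<bar> < R" by (simp add: inner_diff_left)
      have 2: "real (k b) / N \<le> y \<bullet> b" "y \<bullet> b \<le> real (k b) / N + \<delta>"
        using y(1) b unfolding mem_grid_cube by auto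
      have "k b < N" using k b unfolding grid_indices_def by auto
      with 1 2 show "k b \<in> T b" unfolding T_def by auto
    next
      fix b :: 'a assume "b \<notin> Basis"
      then show "k b = undefined" using k unfolding grid_indices_def by auto
    qed
  qed
  then have "card K \<le> card (\<Pi>\<^sub>E b\<in>Basis. T b)"
    by (rule card_mono[rotated]) (auto simp: T_def intro!: finite_PiE)
  then have "real (card K) \<le> (\<Prod>b\<in>(Basis::'a set). real (card (T b)))"
    by (simp add: card_PiE flip: of_nat_prod)
  also have "\<dots> \<le> (\<Prod>b\<in>(Basis::'a set). 2 * (R + \<delta>) * N + 1)"
    using N R \<delta> card_near_grid_points_le[of N "R + \<delta>"] unfolding T_def
    by (intro prod_mono) (auto simp: algebra_simps)
  finally show ?thesis by (simp add: K_def)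
qed

lemma measure_grid_set_Int_ball_le:
  assumes N: "0 < N" and \<delta>: "0 \<le> \<delta>" and R: "0 \<le> R"
  shows "measure lebesgue (grid_set N \<delta> \<inter> ball x R :: 'a::euclidean_space set)
     \<le> (2 * (R + \<delta>) * N + 1) ^ DIM('a) * \<delta> ^ DIM('a)"
proof -
  define K where "K = {k\<in>grid_indices N. grid_cube N \<delta> k \<inter> ball x R \<noteq> ({} :: 'a set)}"
  have finK: "finite K" unfolding K_def by (rule finite_subset[OF _ finite_grid_indices]) auto
  have "grid_set N \<delta> \<inter> ball x R \<subseteq> (\<Union>k\<in>K. grid_cube N \<delta> k)"
    unfolding grid_set_def K_def by auto
  then have "measure lebesgue (grid_set N \<delta> \<inter> ball x R) \<le> measure lebesgue (\<Union>k\<in>K. grid_cube N \<delta> k)"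
    using finK by (intro measure_mono_fmeasurable)
      (auto simp: grid_cube_lmeasurable fmeasurableD grid_set_lmeasurable
        intro!: fmeasurableD[OF fmeasurable.finite_UN])
  also have "\<dots> \<le> (\<Sum>k\<in>K. measure lebesgue (grid_cube N \<delta> k :: 'a set))"
    using finK by (intro measure_UNION_le) (auto simp: grid_cube_lmeasurable fmeasurableD)
  also have "\<dots> = real (card K) * \<delta> ^ DIM('a)"
    using \<delta> by (simp add: measure_grid_cube)
  also have "\<dots> \<le> (2 * (R + \<delta>) * N + 1) ^ DIM('a) * \<delta> ^ DIM('a)"
    using card_grid_cubes_meeting_ball_le[OF N \<delta> R, of x] \<delta> unfolding K_def
    by (intro mult_right_mono) auto
  finally show ?thesis .
qed

lemma grid_cube_subset_ball:
  assumes \<delta>: "0 < \<delta>"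
  shows "(grid_cube N \<delta> k :: 'a::euclidean_space set)
    \<subseteq> ball (grid_corner N k + (\<delta>/2) *\<^sub>R One) (real DIM('a) * \<delta>)"
    (is "_ \<subseteq> ball ?z _")
proof
  fix y :: 'a assume y: "y \<in> grid_cube N \<delta> k"
  have "norm (?z - y) \<le> (\<Sum>b\<in>Basis. \<bar>(?z - y) \<bullet> b\<bar>)" by (rule norm_le_l1)
  also have "\<dots> \<le> (\<Sum>b\<in>(Basis::'a set). \<delta> / 2)"
  proof (rule sum_mono)
    fix b :: 'a assume b: "b \<in> Basis"
    have "real (k b) / N \<le> y \<bullet> b" "y \<bullet> b \<le> real (k b) / N + \<delta>"
      using y b unfolding mem_grid_cube by auto
    moreover have "(?z - y) \<bullet> b = real (k b) / N + \<delta>/2 - y \<bullet> b"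
      using b by (simp add: inner_diff_left inner_add_left grid_corner_inner)
    ultimately show "\<bar>(?z - y) \<bullet> b\<bar> \<le> \<delta> / 2" by linarith
  qed
  also have "\<dots> < real DIM('a) * \<delta>" using \<delta> by simp
  finally show "y \<in> ball ?z (real DIM('a) * \<delta>)" by (simp add: dist_norm)
qed

lemma grid_set_subset_ball:
  assumes N: "0 < N" and \<delta>: "\<delta> < 1 / real N"
  shows "grid_set N \<delta> \<subseteq> ball (0::'a::euclidean_space) (2 * real DIM('a))"
proof
  fix x :: 'a assume "x \<in> grid_set N \<delta>"
  then obtain k where k: "k \<in> grid_indices N" "x \<in> grid_cube N \<delta> k" unfolding grid_set_def by auto
  have "norm x \<le> (\<Sum>b\<in>Basis. \<bar>x \<bullet> b\<bar>)" by (rule norm_le_l1)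
  also have "\<dots> < (\<Sum>b\<in>(Basis::'a set). 2)"
  proof (rule sum_strict_mono)
    fix b :: 'a assume b: "b \<in> Basis"
    have "real (k b) / N \<le> x \<bullet> b" "x \<bullet> b \<le> real (k b) / N + \<delta>"
      using k(2) b unfolding mem_grid_cube by auto
    moreover have "k b < N" using k(1) b unfolding grid_indices_def by auto
    then have "real (k b) / N \<le> 1" using N by simp
    moreover have "1 / real N \<le> 1" using N by simp
    ultimately show "\<bar>x \<bullet> b\<bar> < 2" using \<delta> by (smt (verit) divide_nonneg_nonneg of_nat_0_le_iff)
  qed auto
  also have "\<dots> = 2 * real DIM('a)" by simp
  finally show "x \<in> ball 0 (2 * real DIM('a))" by simp
qed

section \<open>Upper bound for the Morrey--Lorentz norm of the grid\<close>

text \<open>In the next three lemmas \<open>m\<close> stands for the measure of the part of the grid inside a ball of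
  radius \<open>R\<close> and volume \<open>\<omega> R^n\<close>; it is bounded by the volume of the ball, by the number of cubes
  meeting the ball, and by the measure of the whole grid.\<close>

lemma morrey_term_le_small_ball:
  fixes \<omega> n p lam N \<delta> R m :: real
  assumes \<omega>: "0 < \<omega>" and n: "0 < n" and p: "0 < p" and lam: "p < lam"
    and N: "0 < N" and \<delta>: "0 < \<delta>" and R: "0 < R" "R \<le> 1 / N" and m: "0 \<le> m"
    and m_ball: "m \<le> \<omega> * R powr n"
    and m_cubes: "m \<le> (2 * (R + \<delta>) * N + 1) powr n * \<delta> powr n"
  shows "(\<omega> * R powr n) powr (1/lam - 1/p) * m powr (1/p)
     \<le> (\<omega> powr (1/lam) + \<omega> powr (1/lam - 1/p) * 5 powr (n/p)) * \<delta> powr (n/lam)"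
proof -
  define e where "e = 1/lam - 1/p"
  have e: "e < 0" using p lam unfolding e_def by (simp add: frac_less2)
  have ne: "n * e + n / p = n / lam" by (simp add: e_def algebra_simps)
  define V where "V = \<omega> * R powr n"
  show ?thesis
  proof (cases "R \<le> \<delta>")
    case True
    have "V powr e * m powr (1/p) \<le> V powr e * V powr (1/p)"
      using m m_ball p by (intro mult_left_mono powr_mono2) (auto simp: V_def)
    also have "\<dots> = V powr (1/lam)" by (simp add: e_def flip: powr_add)
    also have "\<dots> = \<omega> powr (1/lam) * R powr (n/lam)"
      using \<omega> R by (simp add: V_def powr_mult powr_powr)
    also have "\<dots> \<le> \<omega> powr (1/lam) * \<delta> powr (n/lam)"
      using True R n p lam by (intro mult_left_mono powr_mono2) auto
    finally show ?thesis by (simp add: V_def e_def distrib_right add_increasing2)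
  next
    case False
    have "R * N \<le> 1" using R N by (simp add: field_simps)
    moreover have "\<delta> * N \<le> R * N" using False N by (intro mult_right_mono) auto
    moreover have "2 * (R + \<delta>) * N + 1 = 2*(R*N) + 2*(\<delta>*N) + 1" by (simp add: algebra_simps)
    ultimately have "2 * (R + \<delta>) * N + 1 \<le> 5" by linarith
    then have "(2 * (R + \<delta>) * N + 1) powr n \<le> 5 powr n"
      using n \<delta> N R by (intro powr_mono2) auto
    then have "m \<le> 5 powr n * \<delta> powr n"
      using m_cubes by (meson mult_right_mono order.trans powr_ge_zero)
    then have "m powr (1/p) \<le> 5 powr (n/p) * \<delta> powr (n/p)"
      using m p \<delta> powr_mono2[of "1/p" m "5 powr n * \<delta> powr n"] by (simp add: powr_mult powr_powr)
    moreover have "V powr e \<le> \<omega> powr e * \<delta> powr (n * e)"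
    proof -
      have "V powr e \<le> (\<omega> * \<delta> powr n) powr e"
        using e \<omega> \<delta> False n by (intro powr_mono2') (auto simp: V_def intro!: mult_left_mono powr_mono2)
      then show ?thesis using \<omega> \<delta> by (simp add: powr_mult powr_powr)
    qed
    ultimately have "V powr e * m powr (1/p) \<le> \<omega> powr e * \<delta> powr (n * e) * (5 powr (n/p) * \<delta> powr (n/p))"
      by (intro mult_mono) auto
    also have "\<dots> = \<omega> powr e * 5 powr (n/p) * \<delta> powr (n/lam)"
      by (simp add: powr_add[symmetric] ne)
    finally show ?thesis by (simp add: V_def e_def distrib_right add_increasing)
  qed
qed

lemma morrey_term_le_large_ball:
  fixes \<omega> n p lam N \<delta> R m :: real
  assumes \<omega>: "0 < \<omega>" and n: "0 < n" and p: "0 < p" and lam: "p < lam"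
    and N: "0 < N" and \<delta>: "0 < \<delta>" "\<delta> \<le> 1 / N" and R: "1 / N < R" and m: "0 \<le> m"
    and m_cubes: "m \<le> (2 * (R + \<delta>) * N + 1) powr n * \<delta> powr n"
    and m_grid: "m \<le> (N * \<delta>) powr n"
  shows "(\<omega> * R powr n) powr (1/lam - 1/p) * m powr (1/p)
     \<le> (\<omega> powr (1/lam - 1/p) * 5 powr (n/p) + \<omega> powr (1/lam - 1/p)) * (N * \<delta>) powr (n/p)"
proof -
  define e where "e = 1/lam - 1/p"
  have e: "e < 0" using p lam unfolding e_def by (simp add: frac_less2)
  have ne: "n * e + n / p = n / lam" by (simp add: e_def algebra_simps)
  have "0 < 1 / N" using N by simp
  with R have R0: "0 < R" by linarith
  define V where "V = \<omega> * R powr n"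
  have Ve: "V powr e = \<omega> powr e * R powr (n * e)"
    using \<omega> R0 by (simp add: V_def powr_mult powr_powr)
  show ?thesis
  proof (cases "R \<le> 1")
    case True
    have "1 < R * N" "\<delta> * N \<le> 1" using R \<delta> N by (simp_all add: field_simps)
    moreover have "2 * (R + \<delta>) * N + 1 = 2*(R*N) + 2*(\<delta>*N) + 1" by (simp add: algebra_simps)
    ultimately have "2 * (R + \<delta>) * N + 1 \<le> 5 * R * N" by linarith
    then have "(2 * (R + \<delta>) * N + 1) powr n \<le> (5 * R * N) powr n"
      using n \<delta> N R0 by (intro powr_mono2) auto
    then have "m \<le> (5 * R * N) powr n * \<delta> powr n"
      using m_cubes by (meson mult_right_mono order.trans powr_ge_zero)
    also have "\<dots> = 5 powr n * R powr n * (N * \<delta>) powr n"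
      using R0 N \<delta> by (simp add: powr_mult)
    finally have "m \<le> 5 powr n * R powr n * (N * \<delta>) powr n" .
    then have "m powr (1/p) \<le> 5 powr (n/p) * R powr (n/p) * (N * \<delta>) powr (n/p)"
      using m p R0 N \<delta> powr_mono2[of "1/p" m "5 powr n * R powr n * (N * \<delta>) powr n"]
      by (simp add: powr_mult powr_powr)
    then have "V powr e * m powr (1/p)
        \<le> \<omega> powr e * R powr (n * e) * (5 powr (n/p) * R powr (n/p) * (N * \<delta>) powr (n/p))"
      unfolding Ve by (intro mult_left_mono) auto
    also have "\<dots> = \<omega> powr e * 5 powr (n/p) * R powr (n/lam) * (N * \<delta>) powr (n/p)"
      by (simp add: powr_add[symmetric] ne)
    also have "\<dots> \<le> \<omega> powr e * 5 powr (n/p) * 1 * (N * \<delta>) powr (n/p)"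
      using True R0 n p lam by (intro mult_left_mono mult_right_mono) (auto simp: powr_le1)
    finally show ?thesis by (simp add: V_def e_def distrib_right add_increasing2)
  next
    case False
    have "m powr (1/p) \<le> (N * \<delta>) powr (n/p)"
      using m m_grid p powr_mono2[of "1/p" m "(N * \<delta>) powr n"] by (simp add: powr_powr)
    moreover have "R powr (n * e) \<le> 1"
      using powr_mono[of "n*e" 0 R] False e n by (simp add: mult_pos_neg less_imp_le)
    then have "V powr e \<le> \<omega> powr e" unfolding Ve by (simp add: mult_left_le)
    ultimately have "V powr e * m powr (1/p) \<le> \<omega> powr e * (N * \<delta>) powr (n/p)"
      by (intro mult_mono) auto
    then show ?thesis by (simp add: V_def e_def distrib_right add_increasing)
  qed
qed

lemma morrey_term_le:
  fixes \<omega> n p lam N \<delta> R m :: real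
  assumes \<omega>: "0 < \<omega>" and n: "0 < n" and p: "0 < p" and lam: "p < lam"
    and N: "0 < N" and \<delta>: "0 < \<delta>" "\<delta> \<le> 1 / N" and R: "0 < R" and m: "0 \<le> m"
    and m_ball: "m \<le> \<omega> * R powr n"
    and m_cubes: "m \<le> (2 * (R + \<delta>) * N + 1) powr n * \<delta> powr n"
    and m_grid: "m \<le> (N * \<delta>) powr n"
  shows "(\<omega> * R powr n) powr (1/lam - 1/p) * m powr (1/p)
     \<le> (\<omega> powr (1/lam) + \<omega> powr (1/lam - 1/p) * 5 powr (n/p) + \<omega> powr (1/lam - 1/p))
        * (\<delta> powr (n/lam) + (N * \<delta>) powr (n/p))" (is "_ \<le> ?K * ?S")
proof (cases "R \<le> 1 / N")
  case True
  have "(\<omega> * R powr n) powr (1/lam - 1/p) * m powr (1/p)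
      \<le> (\<omega> powr (1/lam) + \<omega> powr (1/lam - 1/p) * 5 powr (n/p)) * \<delta> powr (n/lam)"
    by (rule morrey_term_le_small_ball[OF \<omega> n p lam N \<delta>(1) R True m m_ball m_cubes])
  also have "\<dots> \<le> ?K * ?S" by (intro mult_mono) auto
  finally show ?thesis .
next
  case False
  have "(\<omega> * R powr n) powr (1/lam - 1/p) * m powr (1/p)
      \<le> (\<omega> powr (1/lam - 1/p) * 5 powr (n/p) + \<omega> powr (1/lam - 1/p)) * (N * \<delta>) powr (n/p)"
    using False by (intro morrey_term_le_large_ball[OF \<omega> n p lam N \<delta> _ m m_cubes m_grid]) simp
  also have "\<dots> \<le> ?K * ?S" by (intro mult_mono) auto
  finally show ?thesis .
qed

lemma morrey_ball_term_grid_set_le: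
  fixes N :: nat and \<delta> p lam R :: real and \<kappa> :: ennreal and c :: "'a::euclidean_space"
  assumes N: "0 < N" and \<delta>: "0 < \<delta>" "\<delta> < 1 / real N" and p: "0 < p" and lam: "p < lam"
    and \<kappa>: "1 \<le> \<kappa>" and R: "0 < R"
  defines "\<omega> \<equiv> unit_ball_vol (real DIM('a))" and "n \<equiv> real DIM('a)"
  shows "ennreal (measure lebesgue (ball c R \<inter> UNIV) powr (1/lam - 1/p)) *
      lorentz_norm (ball c R \<inter> UNIV) p \<kappa> (\<lambda>x. ennreal \<bar>indicator (grid_set N \<delta>) x\<bar>)
    \<le> ennreal ((\<omega> powr (1/lam) + \<omega> powr (1/lam - 1/p) * 5 powr (n/p) + \<omega> powr (1/lam - 1/p))
        * (\<delta> powr (n/lam) + (real N * \<delta>) powr (n/p)))"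
proof -
  define m where "m = measure lebesgue (grid_set N \<delta> \<inter> ball c R :: 'a set)"
  have \<omega>: "0 < \<omega>" and n: "0 < n" by (simp_all add: \<omega>_def n_def)
  have m0: "0 \<le> m" by (simp add: m_def)
  have lm: "grid_set N \<delta> \<inter> ball c R \<in> lmeasurable"
    using grid_set_lmeasurable lmeasurable_ball by (rule fmeasurable.Int)
  have ball: "measure lebesgue (ball c R) = \<omega> * R powr n"
    using R by (simp add: content_ball \<omega>_def n_def powr_realpow)
  have m_ball: "m \<le> \<omega> * R powr n"
    unfolding m_def ball[symmetric] by (rule measure_mono_fmeasurable) (auto simp: fmeasurableD lm)
  have "0 < 2 * (R + \<delta>) * N + 1" using \<delta> R by (intro add_nonneg_pos) auto
  then have m_cubes: "m \<le> (2 * (R + \<delta>) * N + 1) powr n * \<delta> powr n"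
    using measure_grid_set_Int_ball_le[OF N less_imp_le[OF \<delta>(1)] less_imp_le[OF R], of c] \<delta>
    by (simp add: m_def n_def powr_realpow)
  have "m \<le> measure lebesgue (grid_set N \<delta> :: 'a set)"
    unfolding m_def by (rule measure_mono_fmeasurable) (auto simp: fmeasurableD grid_set_lmeasurable)
  then have m_grid: "m \<le> (real N * \<delta>) powr n"
    using measure_grid_set[OF N less_imp_le[OF \<delta>(1)] \<delta>(2), where 'a='a] N \<delta>
    by (simp add: n_def powr_realpow)
  have "lorentz_norm (ball c R \<inter> UNIV) p \<kappa> (\<lambda>x. ennreal \<bar>indicator (grid_set N \<delta>) x\<bar>) \<le> ennreal (m powr (1/p))"
    using lorentz_norm_indicator_le[OF p \<kappa>, of "ball c R" "grid_set N \<delta>" m] m0 emeasure_eq_measure2[OF lm]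
    by (simp add: m_def Int_commute)
  then have "ennreal (measure lebesgue (ball c R \<inter> UNIV) powr (1/lam - 1/p)) *
      lorentz_norm (ball c R \<inter> UNIV) p \<kappa> (\<lambda>x. ennreal \<bar>indicator (grid_set N \<delta>) x\<bar>)
    \<le> ennreal ((\<omega> * R powr n) powr (1/lam - 1/p) * m powr (1/p))"
    by (simp add: ball ennreal_mult' mult_left_mono)
  also have "\<dots> \<le> ennreal ((\<omega> powr (1/lam) + \<omega> powr (1/lam - 1/p) * 5 powr (n/p) + \<omega> powr (1/lam - 1/p))
        * (\<delta> powr (n/lam) + (real N * \<delta>) powr (n/p)))"
    using N by (intro ennreal_leI morrey_term_le[OF \<omega> n p lam _ \<delta>(1) less_imp_le[OF \<delta>(2)] R m0 m_ball m_cubes m_grid])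
      simp
  finally show ?thesis .
qed

lemma morrey_lorentz_norm_grid_set_le:
  fixes p lam :: real and \<kappa> :: ennreal
  assumes p: "0 < p" and lam: "p < lam" and \<kappa>: "1 \<le> \<kappa>"
  obtains K where "0 \<le> K"
    and "\<And>N \<delta>. 0 < N \<Longrightarrow> 0 < \<delta> \<Longrightarrow> \<delta> < 1 / real N \<Longrightarrow>
      morrey_lorentz_norm UNIV lam p \<kappa> (\<lambda>x. ennreal \<bar>indicator (grid_set N \<delta> :: 'a::euclidean_space set) x\<bar>)
      \<le> ennreal (K * (\<delta> powr (DIM('a) / lam) + (real N * \<delta>) powr (DIM('a) / p)))"
proof
  define \<omega> where "\<omega> = unit_ball_vol (real DIM('a))"
  show "0 \<le> \<omega> powr (1/lam) + \<omega> powr (1/lam - 1/p) * 5 powr (DIM('a)/p) + \<omega> powr (1/lam - 1/p)"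
    by simp
  fix N :: nat and \<delta> :: real
  assume "0 < N" "0 < \<delta>" "\<delta> < 1 / real N"
  then show "morrey_lorentz_norm UNIV lam p \<kappa> (\<lambda>x. ennreal \<bar>indicator (grid_set N \<delta> :: 'a set) x\<bar>)
      \<le> ennreal ((\<omega> powr (1/lam) + \<omega> powr (1/lam - 1/p) * 5 powr (DIM('a)/p) + \<omega> powr (1/lam - 1/p))
          * (\<delta> powr (DIM('a) / lam) + (real N * \<delta>) powr (DIM('a) / p)))"
    unfolding morrey_lorentz_norm_def \<omega>_def
    using morrey_ball_term_grid_set_le[OF _ _ _ p lam \<kappa>] by (intro SUP_least) auto
qed

section \<open>Lower bound for the fractional maximal function of the grid\<close>

lemma frac_max_grid_set_ge:
  fixes N :: nat and \<delta> \<alpha> :: real and x :: "'a::euclidean_space"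
  assumes \<delta>: "0 < \<delta>" and x: "x \<in> grid_set N \<delta>"
  shows "ennreal ((unit_ball_vol (DIM('a)) * real DIM('a) ^ DIM('a)) powr (\<alpha> / DIM('a) - 1) * \<delta> powr \<alpha>)
     \<le> frac_max \<alpha> (indicator (grid_set N \<delta>)) x"
proof -
  define n where "n = real DIM('a)"
  define \<omega> where "\<omega> = unit_ball_vol n"
  have n: "0 < n" and \<omega>: "0 < \<omega>" by (simp_all add: n_def \<omega>_def)
  obtain k where k: "k \<in> grid_indices N" "x \<in> grid_cube N \<delta> k"
    using x unfolding grid_set_def by auto
  define z :: 'a where "z = grid_corner N k + (\<delta>/2) *\<^sub>R One"
  define r where "r = n * \<delta>"
  have r: "0 < r" using \<delta> n by (simp add: r_def)
  have cube: "grid_cube N \<delta> k \<subseteq> ball z r"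
    unfolding z_def r_def n_def by (rule grid_cube_subset_ball[OF \<delta>])
  have "ennreal (\<delta> ^ DIM('a)) = emeasure lebesgue (grid_cube N \<delta> k :: 'a set)"
    using emeasure_grid_cube[of \<delta> N k] \<delta> by simp
  also have "\<dots> = (\<integral>\<^sup>+ y. indicator (grid_cube N \<delta> k) y \<partial>lebesgue)"
    by (simp add: grid_cube_lmeasurable fmeasurableD)
  also have "\<dots> \<le> (\<integral>\<^sup>+ y \<in> ball z r. ennreal \<bar>indicator (grid_set N \<delta>) y\<bar> \<partial>lebesgue)"
    using cube k(1) unfolding grid_set_def by (intro nn_integral_mono) (auto simp: indicator_def)
  finally have integral: "ennreal (\<delta> ^ DIM('a)) \<le> \<dots>" .
  have "(\<omega> * n ^ DIM('a)) powr (\<alpha> / n - 1) * \<delta> powr \<alpha>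
      = (\<omega> * r ^ DIM('a)) powr (\<alpha> / n - 1) * \<delta> ^ DIM('a)"
  proof -
    have "\<delta> ^ DIM('a) = \<delta> powr n" using \<delta> by (simp add: n_def powr_realpow)
    moreover have "(\<omega> * r ^ DIM('a)) powr (\<alpha> / n - 1) = (\<omega> * n ^ DIM('a)) powr (\<alpha> / n - 1) * \<delta> powr (\<alpha> - n)"
      using \<omega> n \<delta> by (simp add: r_def power_mult_distrib powr_mult powr_realpow[symmetric] powr_powr
          mult.assoc right_diff_distrib n_def)
    ultimately show ?thesis using \<delta> by (simp add: powr_add[symmetric])
  qed
  also have "ennreal \<dots> = ennreal (measure lebesgue (ball z r) powr (\<alpha> / n - 1)) * ennreal (\<delta> ^ DIM('a))"
    using r \<delta> by (simp add: content_ball \<omega>_def n_def ennreal_mult)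
  also have "\<dots> \<le> ennreal (measure lebesgue (ball z r) powr (\<alpha> / n - 1)) *
       (\<integral>\<^sup>+ y \<in> ball z r. ennreal \<bar>indicator (grid_set N \<delta>) y\<bar> \<partial>lebesgue)"
    using integral by (rule mult_left_mono) simp
  also have "\<dots> \<le> frac_max \<alpha> (indicator (grid_set N \<delta>)) x"
    using frac_max_ge_ball[OF r, of x z \<alpha> "indicator (grid_set N \<delta>)"] cube k(2) by (auto simp: n_def)
  finally show ?thesis by (simp add: \<omega>_def n_def)
qed

lemma unit_ball_vol_mult_powr_pos: "0 < n \<Longrightarrow> 0 < (unit_ball_vol n * n ^ k) powr x"
  by (metis powr_gt_zero less_irrefl mult_pos_pos unit_ball_vol_pos zero_less_power less_imp_le)

lemma lorentz_norm_frac_max_grid_set_ge: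
  fixes N :: nat and \<delta> r \<alpha> :: real and \<nu> :: ennreal
  assumes N: "0 < N" and \<delta>: "0 < \<delta>" "\<delta> < 1 / real N" and r: "1 \<le> r" and \<nu>: "1 \<le> \<nu>"
  shows "ennreal ((unit_ball_vol (DIM('a)) * real DIM('a) ^ DIM('a)) powr (\<alpha> / DIM('a) - 1) * \<delta> powr \<alpha>
       * ((real N * \<delta>) ^ DIM('a) / 2) powr (1/r) / (2*r))
    \<le> lorentz_norm (ball 0 (2 * real DIM('a))) r \<nu> (frac_max \<alpha> (indicator (grid_set N \<delta> :: 'a::euclidean_space set)))"
proof (rule lorentz_norm_ge_of_lower_bound[OF _ _ _ _ _ _ _ r \<nu>])
  show "grid_set N \<delta> \<subseteq> ball (0::'a) (2 * real DIM('a))"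
    by (rule grid_set_subset_ball[OF N \<delta>(2)])
  show "emeasure lebesgue (grid_set N \<delta> :: 'a set) = ennreal ((real N * \<delta>) ^ DIM('a))"
    using emeasure_eq_measure2[OF grid_set_lmeasurable[of N \<delta>, where 'a='a]]
      measure_grid_set[OF N less_imp_le[OF \<delta>(1)] \<delta>(2), where 'a='a]
    by simp
  show "\<And>x::'a. x \<in> grid_set N \<delta> \<Longrightarrow> ennreal ((unit_ball_vol (DIM('a)) * real DIM('a) ^ DIM('a))
      powr (\<alpha> / DIM('a) - 1) * \<delta> powr \<alpha>) \<le> frac_max \<alpha> (indicator (grid_set N \<delta>)) x"
    by (rule frac_max_grid_set_ge[OF \<delta>(1)])
  show "\<And>s. {x \<in> ball (0::'a) (2 * real DIM('a)). ennreal s < frac_max \<alpha> (indicator (grid_set N \<delta>)) x}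
      \<in> sets lebesgue"
    by (rule sets_frac_max_superlevel) simp
qed (use N \<delta> unit_ball_vol_mult_powr_pos[of "real DIM('a)"] in simp_all)

lemma morrey_lorentz_norm_frac_max_grid_set_ge:
  fixes r \<mu> \<alpha> :: real and \<nu> :: ennreal
  assumes r: "1 \<le> r" and \<nu>: "1 \<le> \<nu>"
  obtains B where "0 < B"
    and "\<And>N \<delta>. 0 < N \<Longrightarrow> 0 < \<delta> \<Longrightarrow> \<delta> < 1 / real N \<Longrightarrow>
      ennreal (B * \<delta> powr \<alpha> * (real N * \<delta>) powr (DIM('a) / r))
      \<le> morrey_lorentz_norm UNIV \<mu> r \<nu> (frac_max \<alpha> (indicator (grid_set N \<delta> :: 'a::euclidean_space set)))"
proof
  define n where "n = real DIM('a)"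
  define Q :: "'a set" where "Q = ball 0 (2 * n)"
  define A where "A = (unit_ball_vol n * n ^ DIM('a)) powr (\<alpha> / n - 1)"
  define B where "B = measure lebesgue Q powr (1/\<mu> - 1/r) * A * 2 powr (-1/r) / (2*r)"
  have n: "0 < n" by (simp add: n_def)
  have A: "0 < A" unfolding A_def using n by (rule unit_ball_vol_mult_powr_pos)
  show "0 < B" using A r n by (simp add: B_def Q_def)
  fix N :: nat and \<delta> :: real
  assume N: "0 < N" and \<delta>: "0 < \<delta>" "\<delta> < 1 / real N"
  have "((real N * \<delta>) ^ DIM('a) / 2) powr (1/r) = (real N * \<delta>) powr (n / r) * 2 powr (-1/r)"
    using N \<delta> by (simp add: n_def powr_divide powr_realpow[symmetric] powr_powr powr_minus_divide)
  then have "ennreal (B * \<delta> powr \<alpha> * (real N * \<delta>) powr (n / r))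
      = ennreal (measure lebesgue Q powr (1/\<mu> - 1/r))
        * ennreal (A * \<delta> powr \<alpha> * ((real N * \<delta>) ^ DIM('a) / 2) powr (1/r) / (2*r))"
    by (simp add: B_def ennreal_mult'[symmetric] ac_simps)
  also have "\<dots> \<le> ennreal (measure lebesgue (Q \<inter> UNIV) powr (1/\<mu> - 1/r))
      * lorentz_norm (Q \<inter> UNIV) r \<nu> (frac_max \<alpha> (indicator (grid_set N \<delta> :: 'a set)))"
    using lorentz_norm_frac_max_grid_set_ge[OF N \<delta> r \<nu>, where 'a='a]
    by (simp add: A_def Q_def n_def mult_left_mono)
  also have "\<dots> \<le> morrey_lorentz_norm UNIV \<mu> r \<nu> (frac_max \<alpha> (indicator (grid_set N \<delta> :: 'a set)))"
    unfolding Q_def using n by (intro morrey_lorentz_norm_ge_ball) simp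
  finally show "ennreal (B * \<delta> powr \<alpha> * (real N * \<delta>) powr (DIM('a) / r))
      \<le> morrey_lorentz_norm UNIV \<mu> r \<nu> (frac_max \<alpha> (indicator (grid_set N \<delta> :: 'a set)))"
    by (simp add: n_def)
qed

section \<open>The scaling argument\<close>

lemma grid_scaling_exponents:
  fixes t p lam r \<mu> n \<alpha> :: real
  assumes t: "0 < t" and p: "0 < p" "p < lam" and r: "0 < r" and \<mu>: "0 < \<mu>"
    and \<alpha>: "\<alpha> = n * (1/lam - 1/\<mu>)"
  defines "b \<equiv> lam / (lam - p)"
  shows "(t powr -b) powr (n/lam) + (t * t powr -b) powr (n/p) = 2 * t powr (- n / (lam - p))"
    and "(t powr -b) powr \<alpha> * (t * t powr -b) powr (n/r)
      = t powr (- n / (lam - p)) * t powr (n * (lam/\<mu> - p/r) / (lam - p))"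
proof -
  have tb: "t * t powr -b = t powr (1 - b)" using t by (simp add: powr_diff powr_minus divide_inverse)
  have "-b * (n / lam) = - n / (lam - p)" "(1 - b) * (n / p) = - n / (lam - p)"
    using p unfolding b_def by (simp_all add: field_simps)
  then show "(t powr -b) powr (n/lam) + (t * t powr -b) powr (n/p) = 2 * t powr (- n / (lam - p))"
    using t by (simp add: tb powr_powr)
  have lp: "lam - p \<noteq> 0" "lam \<noteq> 0" using p by auto
  have b: "b * (lam - p) = lam" "(1 - b) * (lam - p) = - p"
    using lp unfolding b_def by (simp_all add: field_simps)
  have "(lam - p) * (-b * \<alpha> + (1 - b) * (n/r)) = - (b * (lam - p)) * \<alpha> + ((1 - b) * (lam - p)) * (n/r)"
    using r by (simp add: field_simps)
  also have "\<dots> = - n + n * (lam/\<mu> - p/r)"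
    using lp r \<mu> unfolding b \<alpha> by (simp add: field_simps)
  finally have "-b * \<alpha> + (1 - b) * (n/r) = (- n + n * (lam/\<mu> - p/r)) / (lam - p)"
    using lp by (simp add: eq_divide_eq mult.commute)
  then show "(t powr -b) powr \<alpha> * (t * t powr -b) powr (n/r)
      = t powr (- n / (lam - p)) * t powr (n * (lam/\<mu> - p/r) / (lam - p))"
    using t by (simp add: tb powr_powr diff_divide_distrib flip: powr_add)
qed

lemma exists_nat_powr_gt:
  fixes D w :: real
  assumes w: "0 < w"
  obtains N :: nat where "2 \<le> N" and "D < real N powr w"
proof
  define y where "y = max D 1 powr (1/w)"
  show "2 \<le> nat \<lceil>y\<rceil> + 2" by simp
  have "D \<le> y powr w" using w by (simp add: y_def powr_powr)
  also have "\<dots> < real (nat \<lceil>y\<rceil> + 2) powr w"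
    using w by (intro powr_less_mono2) (auto simp: y_def, linarith)
  finally show "D < real (nat \<lceil>y\<rceil> + 2) powr w" .
qed

lemma ennreal_le_mult_ennrealD:
  assumes "ennreal a \<le> ennreal C * ennreal b" and "0 \<le> b"
  shows "a \<le> max C 0 * b"
proof (cases "C \<le> 0")
  case True
  then have "ennreal a \<le> 0" using assms(1) by (simp add: ennreal_neg)
  then show ?thesis using True by (simp add: ennreal_eq_0_iff)
next
  case False
  then have "ennreal a \<le> ennreal (C * b)" using assms by (simp add: ennreal_mult)
  moreover have "0 \<le> C * b" using False assms(2) by simp
  ultimately show ?thesis using False by (auto simp: ennreal_le_iff2)
qed

lemma morrey_lorentz_norms_grid_set_scaling:
  fixes p lam r \<mu> \<alpha> :: real and \<kappa> \<nu> :: ennreal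
  assumes p: "0 < p" "p < lam" and r: "1 \<le> r" and \<mu>: "0 < \<mu>" and \<kappa>: "1 \<le> \<kappa>" and \<nu>: "1 \<le> \<nu>"
    and \<alpha>: "\<alpha> = real DIM('a) * (1/lam - 1/\<mu>)"
  defines "b \<equiv> lam / (lam - p)" and "u \<equiv> - real DIM('a) / (lam - p)"
    and "w \<equiv> real DIM('a) * (lam/\<mu> - p/r) / (lam - p)"
  obtains K B where "0 \<le> K" and "0 < B"
    and "\<And>N. 2 \<le> N \<Longrightarrow> morrey_lorentz_norm UNIV lam p \<kappa>
        (\<lambda>x. ennreal \<bar>indicator (grid_set N (real N powr -b) :: 'a::euclidean_space set) x\<bar>)
      \<le> ennreal (2 * K * real N powr u)"
    and "\<And>N. 2 \<le> N \<Longrightarrow> ennreal (B * real N powr u * real N powr w)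
      \<le> morrey_lorentz_norm UNIV \<mu> r \<nu> (frac_max \<alpha> (indicator (grid_set N (real N powr -b) :: 'a set)))"
proof -
  obtain K where K: "0 \<le> K" and upper: "\<And>N \<delta>. 0 < N \<Longrightarrow> 0 < \<delta> \<Longrightarrow> \<delta> < 1 / real N \<Longrightarrow>
      morrey_lorentz_norm UNIV lam p \<kappa> (\<lambda>x. ennreal \<bar>indicator (grid_set N \<delta> :: 'a set) x\<bar>)
      \<le> ennreal (K * (\<delta> powr (DIM('a) / lam) + (real N * \<delta>) powr (DIM('a) / p)))"
    using morrey_lorentz_norm_grid_set_le[OF p \<kappa>] by blast
  obtain B where B: "0 < B" and lower: "\<And>N \<delta>. 0 < N \<Longrightarrow> 0 < \<delta> \<Longrightarrow> \<delta> < 1 / real N \<Longrightarrow>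
      ennreal (B * \<delta> powr \<alpha> * (real N * \<delta>) powr (DIM('a) / r))
      \<le> morrey_lorentz_norm UNIV \<mu> r \<nu> (frac_max \<alpha> (indicator (grid_set N \<delta> :: 'a set)))"
    using morrey_lorentz_norm_frac_max_grid_set_ge[OF r \<nu>] by blast
  have "1 < b" using p by (simp add: b_def)
  then have \<delta>: "0 < real N powr -b" "real N powr -b < 1 / real N" if "2 \<le> N" for N :: nat
    using that powr_less_mono[of "-b" "-1" "real N"] by (auto simp: powr_minus_divide)
  show thesis
  proof (rule that[OF K B])
    fix N :: nat assume N: "2 \<le> N"
    note scaling = grid_scaling_exponents[of "real N" p lam r \<mu> \<alpha> "real DIM('a)", folded b_def u_def w_def]
    show "morrey_lorentz_norm UNIV lam p \<kappa> (\<lambda>x. ennreal \<bar>indicator (grid_set N (real N powr -b) :: 'a set) x\<bar>)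
      \<le> ennreal (2 * K * real N powr u)"
      using upper[OF _ \<delta>[OF N]] scaling(1) N p r \<mu> \<alpha> by (simp add: mult.assoc mult.left_commute)
    show "ennreal (B * real N powr u * real N powr w)
      \<le> morrey_lorentz_norm UNIV \<mu> r \<nu> (frac_max \<alpha> (indicator (grid_set N (real N powr -b) :: 'a set)))"
      using lower[OF _ \<delta>[OF N]] scaling(2) N p r \<mu> \<alpha> by (simp add: mult.assoc)
  qed
qed

lemma frac_max_morrey_counterexample:
  fixes p lam r \<mu> \<alpha> C :: real and \<kappa> \<nu> :: ennreal
  assumes p: "0 < p" "p < lam" and r: "1 \<le> r" and \<mu>: "0 < \<mu>" and \<kappa>: "1 \<le> \<kappa>" and \<nu>: "1 \<le> \<nu>"
    and \<alpha>: "\<alpha> = real DIM('a) * (1/lam - 1/\<mu>)" and gap: "p / r < lam / \<mu>"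
  obtains f :: "'a::euclidean_space \<Rightarrow> real"
  where "f \<in> borel_measurable lebesgue"
    and "morrey_lorentz_norm UNIV lam p \<kappa> (\<lambda>x. ennreal \<bar>f x\<bar>) < top"
    and "\<not> morrey_lorentz_norm UNIV \<mu> r \<nu> (frac_max \<alpha> f)
        \<le> ennreal C * morrey_lorentz_norm UNIV lam p \<kappa> (\<lambda>x. ennreal \<bar>f x\<bar>)"
proof -
  define b where "b = lam / (lam - p)"
  define u where "u = - real DIM('a) / (lam - p)"
  define w where "w = real DIM('a) * (lam/\<mu> - p/r) / (lam - p)"
  have w: "0 < w" using gap p by (simp add: w_def)
  obtain K B where K: "0 \<le> K" and B: "0 < B"
    and upper: "\<And>N. 2 \<le> N \<Longrightarrow> morrey_lorentz_norm UNIV lam p \<kappa>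
        (\<lambda>x. ennreal \<bar>indicator (grid_set N (real N powr -b) :: 'a set) x\<bar>) \<le> ennreal (2 * K * real N powr u)"
    and lower: "\<And>N. 2 \<le> N \<Longrightarrow> ennreal (B * real N powr u * real N powr w)
        \<le> morrey_lorentz_norm UNIV \<mu> r \<nu> (frac_max \<alpha> (indicator (grid_set N (real N powr -b) :: 'a set)))"
    using morrey_lorentz_norms_grid_set_scaling[OF p r \<mu> \<kappa> \<nu> \<alpha>, folded b_def u_def w_def] by blast
  obtain N :: nat where N: "2 \<le> N" and large: "2 * max C 0 * K / B < real N powr w"
    using exists_nat_powr_gt[OF w] by blast
  let ?f = "indicator (grid_set N (real N powr -b)) :: 'a \<Rightarrow> real"
  show thesis
  proof (rule that[of ?f])
    show "?f \<in> borel_measurable lebesgue"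
      by (intro borel_measurable_indicator fmeasurableD grid_set_lmeasurable)
    show "morrey_lorentz_norm UNIV lam p \<kappa> (\<lambda>x. ennreal \<bar>?f x\<bar>) < top"
      using upper[OF N] by (rule le_less_trans) simp
    show "\<not> morrey_lorentz_norm UNIV \<mu> r \<nu> (frac_max \<alpha> ?f)
        \<le> ennreal C * morrey_lorentz_norm UNIV lam p \<kappa> (\<lambda>x. ennreal \<bar>?f x\<bar>)"
    proof
      assume "morrey_lorentz_norm UNIV \<mu> r \<nu> (frac_max \<alpha> ?f)
        \<le> ennreal C * morrey_lorentz_norm UNIV lam p \<kappa> (\<lambda>x. ennreal \<bar>?f x\<bar>)"
      with lower[OF N] upper[OF N]
      have "ennreal (B * real N powr u * real N powr w) \<le> ennreal C * ennreal (2 * K * real N powr u)"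
        by (meson mult_left_mono order_trans zero_le)
      then have "B * real N powr u * real N powr w \<le> max C 0 * (2 * K * real N powr u)"
        by (rule ennreal_le_mult_ennrealD) (use K in simp)
      then have "B * real N powr w \<le> 2 * max C 0 * K" using N by (simp add: field_simps)
      with large B show False by (simp add: field_simps)
    qed
  qed
qed

theorem theorem3p4:
  fixes p lam r \<mu> \<alpha> :: real and \<kappa> \<nu> :: ennreal
  assumes "1 < p" "p < lam" "1 < r" "r < \<mu>" "lam < \<mu>" "r / \<mu> > p / lam"
    and "1 \<le> \<kappa>" and "1 \<le> \<nu>"
    and "\<alpha> / real DIM('a::euclidean_space) = 1 / lam - 1 / \<mu>"
  shows "\<not> (\<exists>C::real. \<forall>f :: 'a \<Rightarrow> real.
            f \<in> borel_measurable lebesgue \<and>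
            morrey_lorentz_norm UNIV lam p \<kappa> (\<lambda>x. ennreal \<bar>f x\<bar>) < top \<longrightarrow>
            morrey_lorentz_norm UNIV \<mu> r \<nu> (frac_max \<alpha> f)
              \<le> ennreal C * morrey_lorentz_norm UNIV lam p \<kappa> (\<lambda>x. ennreal \<bar>f x\<bar>))"
proof -
  have "0 < p" "1 \<le> r" "0 < \<mu>" using assms(1,3,4) by auto
  moreover have "\<alpha> = real DIM('a) * (1/lam - 1/\<mu>)" using assms(9) by (simp add: field_simps)
  moreover have "p / r < lam / \<mu>" using assms(1-6) by (simp add: field_simps)
  ultimately show ?thesis
    using frac_max_morrey_counterexample[of p lam r \<mu> \<kappa> \<nu> \<alpha>] assms(2,7,8) by blast
qed

end
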